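(* Let $f\in\mathcal N(J)^\perp$ and let $(f_n)$ be generated by the scheme (S) (no spectral-case assumption). Then $(f_n)$ is bounded by $\|f\|$ and admits a subsequence $(f_{n_k})$ converging weakly in $\mathcal H$ to some $g\in\mathcal H$.
   Context: Let $\mathcal H$ be a real Hilbert space and $J:\mathcal H\to\mathbb R\cup\{+\infty\}$ a proper, convex, lower semicontinuous, absolutely one-homogeneous functional ($J(\alpha u)=|\alpha|J(u)$). Let $\mathcal N(J)=\{u: J(u)=0\}$ be its null-space, and assume the Poincaré-type inequality: there is $C>0$ with $\|u\|\le C J(u)$ for all $u\in\mathcal N(J)^\perp$. $\partial J$ denotes the convex subdifferential. Gradient flow: for $g\in\mathcal H$, the gradient flow of $J$ with datum $g$ is the solution $u$ of $u'(t)=-p(t)$, $p(t)\in\partial J(u(t))$, $u(0)=g$, where $p(t)$ is the element of minimal norm in $\partial J(u(t))$. For $g\in\mathcal N(J)^\perp\setminus\{0\}$ the flow extinguishes at a finite time $T>0$. An extinction profile of $g$ is any element $p^*=\lim_{k\to\infty}\frac{1}{T-t_k}\int_{t_k}^T p(s)\,ds$ for some increasing sequence $t_k\to T$ along which the limit exists; it is known that such $p^*$ exists, $p^*\neq 0$ and $p^*\in\partial J(p^* )$. Scheme (S): given $f\in\mathcal N(J)^\perp$, set $f_0=f$ and for $n\ge0$ let $p_n^*$ be an extinction profile of $f_n$, $c_n=\langle f_n,p_n^*\rangle/\|p_n^*\|^2$, and $f_{n+1}=f_n-c_np_n^*$. (If some $f_n=0$, the scheme is stopped and we set $f_m=0$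 for $m\ge n$.) *)

theory Defs
  imports "HOL-Analysis.Analysis"
begin

text \<open>Functionals take values in the extended reals (only finite values or +\<infinity> are allowed).\<close>

definition proper_fun :: "('a \<Rightarrow> ereal) \<Rightarrow> bool" where
  "proper_fun J \<longleftrightarrow> (\<forall>u. J u \<noteq> -\<infinity>) \<and> (\<exists>u. J u \<noteq> \<infinity>)"

definition convex_fun :: "('a::real_vector \<Rightarrow> ereal) \<Rightarrow> bool" where
  "convex_fun J \<longleftrightarrow> (\<forall>x y (l::real). 0 < l \<and> l < 1 \<longrightarrow>
      J (l *\<^sub>R x + (1 - l) *\<^sub>R y) \<le> ereal l * J x + ereal (1 - l) * J y)"

definition lsc_fun :: "('a::topological_space \<Rightarrow> ereal) \<Rightarrow> bool" where
  "lsc_fun J \<longleftrightarrow> (\<forall>c::real. closed {u. J u \<le> ereal c})"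

definition abs_one_homogeneous :: "('a::real_vector \<Rightarrow> ereal) \<Rightarrow> bool" where
  "abs_one_homogeneous J \<longleftrightarrow> (\<forall>(a::real) u. J (a *\<^sub>R u) = ereal \<bar>a\<bar> * J u)"

definition null_space :: "('a \<Rightarrow> ereal) \<Rightarrow> 'a set" where
  "null_space J = {u. J u = 0}"

definition orth_compl :: "'a::real_inner set \<Rightarrow> 'a set" where
  "orth_compl S = {u. \<forall>v\<in>S. inner u v = 0}"

definition poincare :: "('a::real_inner \<Rightarrow> ereal) \<Rightarrow> bool" where
  "poincare J \<longleftrightarrow> (\<exists>C>0. \<forall>u\<in>orth_compl (null_space J). ereal (norm u) \<le> ereal C * J u)"

definition subdiff :: "('a::real_inner \<Rightarrow> ereal) \<Rightarrow> 'a \<Rightarrow> 'a set" where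
  "subdiff J u = {p. J u \<noteq> \<infinity> \<and> (\<forall>v. J u + ereal (inner p (v - u)) \<le> J v)}"

definition min_norm_elem :: "'a::real_normed_vector set \<Rightarrow> 'a \<Rightarrow> bool" where
  "min_norm_elem S p \<longleftrightarrow> p \<in> S \<and> (\<forall>q\<in>S. norm p \<le> norm q)"

text \<open>Gradient flow (strong solution in the sense of Brezis): u continuous on [0,\<infinity>),
  u(0)=g, and for every t>0 the right derivative of u at t exists and equals -p(t),
  where p(t) is the element of minimal norm of \<partial>J(u(t)).\<close>
definition gradient_flow ::
  "('a::{real_inner,complete_space} \<Rightarrow> ereal) \<Rightarrow> 'a \<Rightarrow> (real \<Rightarrow> 'a) \<Rightarrow> (real \<Rightarrow> 'a) \<Rightarrow> bool" where
  "gradient_flow J g u p \<longleftrightarrow>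
     u 0 = g \<and> continuous_on {0..} u \<and>
     (\<forall>t>0. min_norm_elem (subdiff J (u t)) (p t) \<and>
            (u has_vector_derivative - p t) (at t within {t..}))"

definition extinction_time :: "(real \<Rightarrow> 'a::zero) \<Rightarrow> real \<Rightarrow> bool" where
  "extinction_time u T \<longleftrightarrow> T > 0 \<and> (\<forall>t\<ge>T. u t = 0) \<and> (\<forall>t. 0 \<le> t \<and> t < T \<longrightarrow> u t \<noteq> 0)"

definition extinction_profile ::
  "('a::{real_inner,complete_space} \<Rightarrow> ereal) \<Rightarrow> 'a \<Rightarrow> 'a \<Rightarrow> bool" where
  "extinction_profile J g ps \<longleftrightarrow>
     (\<exists>u p T t. gradient_flow J g u p \<and> extinction_time u T \<and>
        strict_mono t \<and> (\<forall>k. 0 \<le> t k \<and> t k < T) \<and> t \<longlonglongrightarrow> T \<and>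
        (\<forall>k. p integrable_on {t k..T}) \<and>
        (\<lambda>k. (1 / (T - t k)) *\<^sub>R integral {t k..T} p) \<longlonglongrightarrow> ps)"

definition scheme_S ::
  "('a::{real_inner,complete_space} \<Rightarrow> ereal) \<Rightarrow> 'a \<Rightarrow> (nat \<Rightarrow> 'a) \<Rightarrow> (nat \<Rightarrow> 'a) \<Rightarrow> bool" where
  "scheme_S J f0 f ps \<longleftrightarrow> f 0 = f0 \<and>
     (\<forall>n. f n \<noteq> 0 \<longrightarrow> extinction_profile J (f n) (ps n) \<and>
            f (Suc n) = f n - (inner (f n) (ps n) / (norm (ps n))\<^sup>2) *\<^sub>R ps n) \<and>
     (\<forall>n. f n = 0 \<longrightarrow> f (Suc n) = 0)"

definition weakly_converges :: "(nat \<Rightarrow> 'a::real_inner) \<Rightarrow> 'a \<Rightarrow> bool" where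
  "weakly_converges x g \<longleftrightarrow> (\<forall>v. (\<lambda>k. inner (x k) v) \<longlonglongrightarrow> inner g v)"

end

theory Submission
  imports Defs "HOL-Library.Diagonal_Subsequence"
begin

text \<open>Each step of the scheme replaces \<open>f\<^sub>n\<close> by its component orthogonal to \<open>p\<^sub>n\<^sup>*\<close>, so the
  norms decrease and the sequence stays in the ball of radius \<open>\<parallel>f\<parallel>\<close>; none of the properties
  of \<open>J\<close> is needed for this. Weak sequential compactness of bounded sets in a Hilbert space
  then gives the subsequence: a diagonal argument makes \<open>\<langle>f\<^sub>n\<^sub>k, v\<rangle>\<close> converge for all \<open>v\<close>
  in the closed span of the sequence, hence (by orthogonal projection) for all \<open>v\<close>, and the
  limit functional is represented by some \<open>g\<close> by the Riesz representation theorem.\<close>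

lemma norm_diff_square_eq_midpoint:
  fixes a b :: "'a::real_inner"
  shows "(norm (a - b))\<^sup>2 = 2 * (norm a)\<^sup>2 + 2 * (norm b)\<^sup>2 - 4 * (norm ((1/2) *\<^sub>R (a + b)))\<^sup>2"
  by (simp add: power2_norm_eq_inner inner_commute algebra_simps)

lemma closest_point_exists_Hilbert:
  fixes M :: "'a::{real_inner,complete_space} set"
  assumes "convex M" and "closed M" and "M \<noteq> {}"
  shows "\<exists>m\<in>M. \<forall>v\<in>M. norm (z - m) \<le> norm (z - v)"
proof -
  define d where "d = Inf ((\<lambda>m. (norm (z - m))\<^sup>2) ` M)"
  have d_le: "d \<le> (norm (z - m))\<^sup>2" if "m \<in> M" for m
    unfolding d_def using that by (intro cInf_lower) (auto intro: bdd_belowI[of _ 0])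
  have "\<exists>m\<in>M. (norm (z - m))\<^sup>2 < d + 1 / (real n + 1)" for n
    using cInf_lessD[of "(\<lambda>m. (norm (z - m))\<^sup>2) ` M" "d + 1 / (real n + 1)"] assms(3)
    unfolding d_def by auto
  then obtain s where s_in: "\<And>n. s n \<in> M"
    and s_near: "\<And>n. (norm (z - s n))\<^sup>2 < d + 1 / (real n + 1)"
    by metis
  \<comment> \<open>the parallelogram law, with the midpoint of \<open>s a\<close> and \<open>s b\<close> lying in \<open>M\<close> by convexity\<close>
  have s_close: "(norm (s a - s b))\<^sup>2 \<le> 2 / (real a + 1) + 2 / (real b + 1)" for a b
  proof -
    have "(1/2) *\<^sub>R (s a + s b) \<in> M"
      using assms(1) s_in unfolding convex_def by (auto simp: scaleR_add_right)
    hence "d \<le> (norm (z - (1/2) *\<^sub>R (s a + s b)))\<^sup>2" by (rule d_le)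
    moreover have "(norm (s a - s b))\<^sup>2 = 2 * (norm (z - s b))\<^sup>2 + 2 * (norm (z - s a))\<^sup>2
        - 4 * (norm (z - (1/2) *\<^sub>R (s a + s b)))\<^sup>2"
      using norm_diff_square_eq_midpoint[of "z - s b" "z - s a"]
      by (simp add: algebra_simps flip: scaleR_add_left)
    ultimately show ?thesis using s_near[of a] s_near[of b] by linarith
  qed
  have "Cauchy s"
  proof (rule CauchyI)
    fix e :: real assume e: "e > 0"
    obtain N :: nat where N: "4 / e\<^sup>2 < real N" using reals_Archimedean2 by blast
    have "N > 0" using N e by (cases N) (auto intro: order.strict_trans2[of _ 0])
    have "norm (s a - s b) < e" if "N \<le> a" "N \<le> b" for a b
    proof (rule power_less_imp_less_base)
      have "2 / (real a + 1) \<le> 2 / real N" "2 / (real b + 1) \<le> 2 / real N"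
        using \<open>N > 0\<close> that by (intro divide_left_mono; simp)+
      moreover have "4 / real N < e\<^sup>2" using N e \<open>N > 0\<close> by (simp add: field_simps)
      ultimately show "(norm (s a - s b))\<^sup>2 < e\<^sup>2" using s_close[of a b] by linarith
    qed (use e in simp)
    thus "\<exists>N. \<forall>a\<ge>N. \<forall>b\<ge>N. norm (s a - s b) < e" by blast
  qed
  then obtain m where m: "s \<longlonglongrightarrow> m" using Cauchy_convergent_iff convergent_def by blast
  have "m \<in> M" using assms(2) m s_in closed_sequential_limits by blast
  have bound_lim: "((\<lambda>n. d + 1 / (real n + 1)) \<longlongrightarrow> d) sequentially"
    using LIMSEQ_inverse_real_of_nat_add[of d] by (simp add: inverse_eq_divide add.commute)
  have "((\<lambda>n. (norm (z - s n))\<^sup>2) \<longlongrightarrow> (norm (z - m))\<^sup>2) sequentially"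
    using m by (intro tendsto_intros)
  hence m_le: "(norm (z - m))\<^sup>2 \<le> d"
    by (rule tendsto_le[OF trivial_limit_sequentially bound_lim])
      (use s_near less_imp_le in \<open>auto intro: always_eventually\<close>)
  have "norm (z - m) \<le> norm (z - v)" if "v \<in> M" for v
  proof (rule power2_le_imp_le)
    show "(norm (z - m))\<^sup>2 \<le> (norm (z - v))\<^sup>2" using m_le d_le[OF that] by linarith
  qed simp
  with \<open>m \<in> M\<close> show ?thesis by blast
qed

lemma closest_point_subspace_orthogonal:
  fixes M :: "'a::real_inner set"
  assumes "subspace M" and "m \<in> M" and closest: "\<And>w. w \<in> M \<Longrightarrow> norm (z - m) \<le> norm (z - w)"
    and "v \<in> M"
  shows "inner (z - m) v = 0"
proof (cases "v = 0")
  case False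
  define w where "w = z - m"
  define a where "a = inner w v"
  define N where "N = (norm v)\<^sup>2"
  have "N > 0" using False unfolding N_def by simp
  have "m + (a / N) *\<^sub>R v \<in> M"
    using assms(1,2,4) by (simp add: subspace_add subspace_scale)
  hence "norm w \<le> norm (w - (a / N) *\<^sub>R v)"
    using closest unfolding w_def by (simp add: diff_diff_eq)
  hence "(norm w)\<^sup>2 \<le> (norm (w - (a / N) *\<^sub>R v))\<^sup>2" by (simp add: power_mono)
  also have "\<dots> = (norm w)\<^sup>2 - a\<^sup>2 / N"
    unfolding a_def N_def power2_norm_eq_inner using \<open>N > 0\<close>[unfolded N_def]
    by (simp add: inner_diff_left inner_diff_right inner_commute field_simps power2_eq_square)
  finally have "a\<^sup>2 / N \<le> 0" by simp
  with \<open>N > 0\<close> show ?thesis unfolding a_def w_def by (simp add: divide_le_0_iff)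
qed simp

lemma orthogonal_projection_exists:
  fixes M :: "'a::{real_inner,complete_space} set"
  assumes "subspace M" and "closed M"
  shows "\<exists>m\<in>M. \<forall>v\<in>M. inner (z - m) v = 0"
proof -
  have "M \<noteq> {}" using assms(1) subspace_0 by blast
  with assms obtain m where "m \<in> M" "\<forall>v\<in>M. norm (z - m) \<le> norm (z - v)"
    using closest_point_exists_Hilbert[OF subspace_imp_convex] by blast
  with assms(1) show ?thesis by (blast intro: closest_point_subspace_orthogonal)
qed

lemma Riesz_representation:
  fixes L :: "'a::{real_inner,complete_space} \<Rightarrow> real"
  assumes "bounded_linear L"
  shows "\<exists>g. \<forall>v. L v = inner g v"
proof (cases "\<forall>v. L v = 0")
  case False
  then obtain z where "L z \<noteq> 0" by blast
  interpret L: bounded_linear L by fact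
  define N where "N = {v. L v = 0}"
  have "subspace N" unfolding N_def subspace_def by (simp add: L.add L.scale)
  moreover have "closed N" unfolding N_def
    by (intro closed_Collect_eq continuous_on_const linear_continuous_on assms)
  ultimately obtain m where "m \<in> N" and m_orth: "\<And>v. v \<in> N \<Longrightarrow> inner (z - m) v = 0"
    using orthogonal_projection_exists by blast
  define z0 where "z0 = z - m"
  have Lz0: "L z0 \<noteq> 0" using \<open>L z \<noteq> 0\<close> \<open>m \<in> N\<close> unfolding z0_def N_def by (simp add: L.diff)
  hence "z0 \<noteq> 0" by auto
  have "L v = inner ((L z0 / (norm z0)\<^sup>2) *\<^sub>R z0) v" for v
  proof -
    have "v - (L v / L z0) *\<^sub>R z0 \<in> N" using Lz0 unfolding N_def by (simp add: L.diff L.scale)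
    hence "inner z0 (v - (L v / L z0) *\<^sub>R z0) = 0" using m_orth z0_def by simp
    hence "inner z0 v = (L v / L z0) * (norm z0)\<^sup>2"
      by (simp add: inner_diff_right power2_norm_eq_inner)
    with Lz0 \<open>z0 \<noteq> 0\<close> show ?thesis by (simp add: field_simps)
  qed
  thus ?thesis by blast
qed (intro exI[of _ 0], simp)

lemma diagonal_subseq_convergent:
  fixes a :: "nat \<Rightarrow> nat \<Rightarrow> real"
  assumes "\<And>m. bounded (range (\<lambda>n. a n m))"
  shows "\<exists>r. strict_mono r \<and> (\<forall>m. convergent (\<lambda>k. a (r k) m))"
proof -
  interpret subseqs "\<lambda>m s. convergent (\<lambda>k. a (s k) m)"
  proof
    fix m and s :: "nat \<Rightarrow> nat"
    have "bounded (range (\<lambda>k. a (s k) m))"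
      using assms[of m] by (rule bounded_subset) auto
    then obtain l r where "strict_mono r" "((\<lambda>k. a (s k) m) \<circ> r) \<longlonglongrightarrow> l"
      using bounded_imp_convergent_subsequence by blast
    thus "\<exists>r. strict_mono r \<and> convergent (\<lambda>k. a ((s \<circ> r) k) m)"
      unfolding convergent_def by (auto simp: o_def)
  qed
  have "convergent (\<lambda>k. a (diagseq k) m)" for m
  proof -
    have "convergent (\<lambda>k. a ((diagseq \<circ> (+) (Suc m)) k) m)"
    proof (rule diagseq_holds)
      fix r s :: "nat \<Rightarrow> nat" and n assume "strict_mono r" "convergent (\<lambda>k. a (s k) n)"
      thus "convergent (\<lambda>k. a ((s \<circ> r) k) n)"
        unfolding convergent_def using LIMSEQ_subseq_LIMSEQ by (fastforce simp: o_def)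
    qed
    then obtain l where "(\<lambda>k. a (diagseq (k + Suc m)) m) \<longlonglongrightarrow> l"
      unfolding convergent_def by (auto simp: o_def add.commute)
    hence "(\<lambda>k. a (diagseq k) m) \<longlonglongrightarrow> l" by (rule LIMSEQ_offset)
    thus ?thesis unfolding convergent_def by blast
  qed
  with subseq_diagseq show ?thesis by blast
qed

lemma subspace_convergent_inner:
  fixes y :: "nat \<Rightarrow> 'a::real_inner"
  shows "subspace {v. convergent (\<lambda>k. inner (y k) v)}"
  unfolding subspace_def convergent_def
  by (auto simp: inner_add_right intro: tendsto_add tendsto_mult_left)

lemma closed_convergent_inner:
  fixes y :: "nat \<Rightarrow> 'a::{real_inner,complete_space}"
  assumes y_bound: "\<And>k. norm (y k) \<le> B"
  shows "closed {v. convergent (\<lambda>k. inner (y k) v)}"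
  unfolding closed_sequential_limits
proof (intro allI impI, elim conjE)
  fix w v assume w: "\<forall>n. w n \<in> {v. convergent (\<lambda>k. inner (y k) v)}" and "w \<longlonglongrightarrow> v"
  have inner_bound: "\<bar>inner (y k) u\<bar> \<le> B * norm u" for k u
    using Cauchy_Schwarz_ineq2[of "y k" u] y_bound[of k]
    by (meson mult_right_mono norm_ge_zero order.trans)
  have "0 \<le> B" using y_bound[of 0] norm_ge_zero order.trans by blast
  \<comment> \<open>an \<open>e/3\<close> argument through a point \<open>w n\<close> close to \<open>v\<close>\<close>
  have "Cauchy (\<lambda>k. inner (y k) v)"
  proof (rule CauchyI)
    fix e :: real assume "0 < e"
    define e' where "e' = e / (3 * (B + 1))"
    have "e' > 0" "B * e' \<le> e / 3"
      unfolding e'_def using \<open>0 < e\<close> \<open>0 \<le> B\<close> by (simp_all add: field_simps)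
    obtain n where "norm (w n - v) < e'"
      using \<open>w \<longlonglongrightarrow> v\<close> \<open>e' > 0\<close> unfolding LIMSEQ_iff by blast
    hence n: "norm (v - w n) < e'" by (simp add: norm_minus_commute)
    have "Cauchy (\<lambda>k. inner (y k) (w n))" using w Cauchy_convergent_iff by blast
    then obtain M where M: "\<And>a b. M \<le> a \<Longrightarrow> M \<le> b \<Longrightarrow> \<bar>inner (y a) (w n) - inner (y b) (w n)\<bar> < e/3"
      using \<open>0 < e\<close> unfolding Cauchy_iff by (metis divide_pos_pos real_norm_def zero_less_numeral)
    have near: "\<bar>inner (y k) (v - w n)\<bar> \<le> e / 3" for k
      using inner_bound[of k "v - w n"] n \<open>0 \<le> B\<close> \<open>B * e' \<le> e / 3\<close>
      by (meson less_imp_le mult_left_mono order.trans)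
    have "\<bar>inner (y a) v - inner (y b) v\<bar> < e" if "M \<le> a" "M \<le> b" for a b
      using near[of a] near[of b] M[OF that]
      by (simp only: inner_diff_right)
    thus "\<exists>M. \<forall>a\<ge>M. \<forall>b\<ge>M. norm (inner (y a) v - inner (y b) v) < e" by auto
  qed
  thus "v \<in> {v. convergent (\<lambda>k. inner (y k) v)}" using Cauchy_convergent_iff by blast
qed

lemma weakly_converges_if_convergent_inner_self:
  fixes y :: "nat \<Rightarrow> 'a::{real_inner,complete_space}"
  assumes y_bound: "\<And>k. norm (y k) \<le> B"
    and self_conv: "\<And>m. convergent (\<lambda>k. inner (y k) (y m))"
  shows "\<exists>g. weakly_converges y g"
proof -
  define S where "S = {v. convergent (\<lambda>k. inner (y k) v)}"
  have "subspace S" "closed S"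
    unfolding S_def using subspace_convergent_inner closed_convergent_inner y_bound by blast+
  \<comment> \<open>\<open>v\<close> and its projection onto \<open>S\<close> have the same inner product with every \<open>y k \<in> S\<close>\<close>
  have conv: "convergent (\<lambda>k. inner (y k) v)" for v
  proof -
    obtain m where "m \<in> S" and m_orth: "\<And>u. u \<in> S \<Longrightarrow> inner (v - m) u = 0"
      using orthogonal_projection_exists[OF \<open>subspace S\<close> \<open>closed S\<close>] by blast
    have "y k \<in> S" for k unfolding S_def using self_conv by blast
    hence "inner (y k) (v - m) = 0" for k using m_orth by (metis inner_commute)
    hence "inner (y k) v = inner (y k) m" for k
      by (simp add: inner_diff_right)
    with \<open>m \<in> S\<close> show ?thesis unfolding S_def by simp
  qed
  define L where "L v = lim (\<lambda>k. inner (y k) v)" for v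
  have L_lim: "(\<lambda>k. inner (y k) v) \<longlonglongrightarrow> L v" for v
    unfolding L_def using conv convergent_LIMSEQ_iff by blast
  have "bounded_linear L"
  proof (rule bounded_linear_intro[of _ B])
    show "L (u + v) = L u + L v" for u v
      using tendsto_add[OF L_lim[of u] L_lim[of v]] L_lim[of "u + v"] LIMSEQ_unique
      by (simp add: inner_add_right)
    show "L (c *\<^sub>R v) = c *\<^sub>R L v" for c v
      using tendsto_mult_left[OF L_lim[of v], of c] L_lim[of "c *\<^sub>R v"] LIMSEQ_unique by simp
    show "norm (L v) \<le> norm v * B" for v
    proof (rule tendsto_le[OF trivial_limit_sequentially tendsto_const tendsto_norm[OF L_lim[of v]]])
      have "norm (inner (y k) v) \<le> norm v * B" for k
        using Cauchy_Schwarz_ineq2[of "y k" v] mult_left_mono[OF y_bound[of k], of "norm v"]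
        by (simp add: mult.commute)
      thus "\<forall>\<^sub>F k in sequentially. norm (inner (y k) v) \<le> norm v * B" by simp
    qed
  qed
  then obtain g where "\<And>v. L v = inner g v" using Riesz_representation by blast
  with L_lim show ?thesis unfolding weakly_converges_def by metis
qed

lemma bounded_imp_weakly_convergent_subseq:
  fixes x :: "nat \<Rightarrow> 'a::{real_inner,complete_space}"
  assumes x_bound: "\<And>n. norm (x n) \<le> B"
  shows "\<exists>r g. strict_mono r \<and> weakly_converges (x \<circ> r) g"
proof -
  have "bounded (range (\<lambda>n. inner (x n) (x m)))" for m
    unfolding bounded_real
  proof (intro exI ballI)
    fix t assume "t \<in> range (\<lambda>n. inner (x n) (x m))"
    then obtain n where "t = inner (x n) (x m)" by blast
    also have "\<bar>\<dots>\<bar> \<le> norm (x n) * norm (x m)" by (rule Cauchy_Schwarz_ineq2)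
    also have "\<dots> \<le> B * B"
      using x_bound order.trans[OF norm_ge_zero x_bound] by (intro mult_mono) simp_all
    finally show "\<bar>t\<bar> \<le> B * B" .
  qed
  then obtain r where "strict_mono r" and conv: "\<And>m. convergent (\<lambda>k. inner (x (r k)) (x m))"
    using diagonal_subseq_convergent[of "\<lambda>n m. inner (x n) (x m)"] by blast
  have "\<exists>g. weakly_converges (x \<circ> r) g"
    using x_bound conv by (intro weakly_converges_if_convergent_inner_self[of _ B]) simp_all
  with \<open>strict_mono r\<close> show ?thesis by blast
qed

lemma norm_orthogonal_component_le:
  fixes f p :: "'a::real_inner"
  shows "norm (f - (inner f p / (norm p)\<^sup>2) *\<^sub>R p) \<le> norm f"
proof (cases "p = 0")
  case False
  define c where "c = inner f p / (norm p)\<^sup>2"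
  have "(norm (f - c *\<^sub>R p))\<^sup>2 = (norm f)\<^sup>2 - 2 * c * inner f p + c\<^sup>2 * (norm p)\<^sup>2"
    unfolding power2_norm_eq_inner
    by (simp add: inner_diff_left inner_diff_right inner_commute algebra_simps power2_eq_square)
  also have "\<dots> = (norm f)\<^sup>2 - (inner f p)\<^sup>2 / (norm p)\<^sup>2"
    unfolding c_def using False by (simp add: field_simps power2_eq_square)
  also have "\<dots> \<le> (norm f)\<^sup>2" by simp
  finally show ?thesis unfolding c_def by (rule power2_le_imp_le) simp
qed simp

lemma scheme_S_norm_le:
  assumes "scheme_S J f0 f ps"
  shows "norm (f n) \<le> norm f0"
proof (induction n)
  case 0
  with assms show ?case by (simp add: scheme_S_def)
next
  case (Suc n)
  have "norm (f (Suc n)) \<le> norm (f n)"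
    using assms norm_orthogonal_component_le[of "f n" "ps n"]
    unfolding scheme_S_def by (cases "f n = 0") auto
  with Suc show ?case by linarith
qed

theorem theorem2:
  fixes J :: "'a::{real_inner,complete_space} \<Rightarrow> ereal"
    and f0 :: 'a and f ps :: "nat \<Rightarrow> 'a"
  assumes "proper_fun J" and "convex_fun J" and "lsc_fun J"
    and "abs_one_homogeneous J" and "poincare J"
    and "f0 \<in> orth_compl (null_space J)"
    and "scheme_S J f0 f ps"
  shows "(\<forall>n. norm (f n) \<le> norm f0) \<and>
         (\<exists>r g. strict_mono r \<and> weakly_converges (f \<circ> r) g)"
proof -
  have "\<forall>n. norm (f n) \<le> norm f0" using scheme_S_norm_le[OF assms(7)] by blast
  with bounded_imp_weakly_convergent_subseq show ?thesis by blast
qed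

end
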